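(* Let $P$ be a Young diagram contained in a $\delta\times\delta$ square and $C_P\subset Gr(\delta,V)$ the corresponding Schubert cell. Then $C_P\cap\overline{JF}\neq\emptyset$ if and only if $P$ is simultaneously an $m$-core and an $n$-core. In that case all $W\in C_P$ have the same set $\Delta(W)=:\Delta_P$, and $C_P\cap\overline{JF}=\{W\in\overline{JF}:\Delta(W)=\Delta_P\}$, which is a cell of Piontkowski's affine cell decomposition of $\overline{JF}$.
   Context: Let $m,n$ be coprime positive integers, $\delta=\frac{(m-1)(n-1)}2$, $R=\mathbb{C}[[t^n,t^m]]\subset\mathbb{C}[[t]]$, and $V=\mathbb{C}[[t]]/t^{2\delta}\mathbb{C}[[t]]$, with filtration $V=V_{2\delta}\supset V_{2\delta-1}\supset\dots\supset V_0=0$, $V_i=t^{2\delta-i}V$. The Jacobi factor $\overline{JF}\subset Gr(\delta,V)$ is the subvariety of $\delta$-dimensional subspaces $W\subset V$ invariant under multiplication by $R$ (equivalently, $R$-submodules $M\subset\mathbb{C}[[t]]$ containing $t^{2\delta}\mathbb{C}[[t]]$ of codimension $\delta$). For a Young diagram $P$ in a $\delta\times\delta$ square with rows $p_1\le\dots\le p_\delta$, the Schubert cell $C_P$ is the set of $W\in Gr(\delta,V)$ with $\dim(W\cap V_i)=\#\{j: p_j+j\le i\}$ for all $i$. For $W\subset V$ set $\Delta(W)=\{d\in\mathbb{Z}: \exists p\in W,\ p\in V_{2\delta-d}\setminus V_{2\delta-d-1}\}\cup[2\delta,\infty)$ (the set of $t$-adic orders of elements of $W$, together with all integers $\ge2\delta$).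 Piontkowski's cell decomposition of $\overline{JF}$ has cells $\{W\in\overline{JF}:\Delta(W)=\Delta\}$, each an affine space. A Young diagram is a $p$-core if none of its boxes has hook length equal to $p$. *)

theory Defs
  imports "HOL-Computational_Algebra.Formal_Power_Series"
begin

text \<open>Elements of C[[t]] are complex formal power series. V = C[[t]]/t^N is represented
  by the power series whose coefficients vanish from degree N on (N = 2 delta).\<close>

definition delta :: "nat \<Rightarrow> nat \<Rightarrow> nat" where
  "delta m n = ((m - 1) * (n - 1)) div 2"

definition Vsp :: "nat \<Rightarrow> complex fps set" where
  "Vsp N = {f. \<forall>i\<ge>N. fps_nth f i = 0}"

definition Vfilt :: "nat \<Rightarrow> nat \<Rightarrow> complex fps set" where
  "Vfilt N i = {f \<in> Vsp N. \<forall>j < N - i. fps_nth f j = 0}"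

definition fscale :: "complex \<Rightarrow> complex fps \<Rightarrow> complex fps" where
  "fscale c f = fps_const c * f"

definition fdim :: "complex fps set \<Rightarrow> nat" where
  "fdim W = vector_space.dim fscale W"

definition Grass :: "nat \<Rightarrow> nat \<Rightarrow> complex fps set set" where
  "Grass N k = {W. W \<subseteq> Vsp N \<and> module.subspace fscale W \<and> fdim W = k}"

text \<open>R = C[[t^n, t^m]]: power series whose exponents lie in the semigroup generated by m, n.\<close>
definition semigroup_ring :: "nat \<Rightarrow> nat \<Rightarrow> complex fps set" where
  "semigroup_ring m n = {r. \<forall>k. fps_nth r k \<noteq> 0 \<longrightarrow> (\<exists>a b. k = a * m + b * n)}"

text \<open>Jacobi factor: delta-dimensional subspaces of V invariant under multiplication by R
  (multiplication taken in V = C[[t]]/t^(2 delta), i.e. truncated).\<close>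
definition JF :: "nat \<Rightarrow> nat \<Rightarrow> complex fps set set" where
  "JF m n = {W \<in> Grass (2 * delta m n) (delta m n).
     \<forall>r \<in> semigroup_ring m n. \<forall>w \<in> W. fps_cutoff (2 * delta m n) (r * w) \<in> W}"

definition DeltaW :: "nat \<Rightarrow> complex fps set \<Rightarrow> nat set" where
  "DeltaW N W = {d. \<exists>p \<in> W. p \<noteq> 0 \<and> subdegree p = d} \<union> {N..}"

text \<open>Young diagram in a k x k square given by rows p 1 \<le> ... \<le> p k (values of p outside
  1..k are irrelevant).\<close>
definition young_in_square :: "nat \<Rightarrow> (nat \<Rightarrow> nat) \<Rightarrow> bool" where
  "young_in_square k p \<longleftrightarrow>
     (\<forall>i j. 1 \<le> i \<longrightarrow> i \<le> j \<longrightarrow> j \<le> k \<longrightarrow> p i \<le> p j) \<and> (\<forall>j\<in>{1..k}. p j \<le> k)"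

text \<open>Hook length of the box in row j, column c (1 \<le> c \<le> p j): arm = p j - c,
  leg = number of rows of length \<ge> c lying beyond row j (the rows j' < j,
  since the rows are listed in increasing order).\<close>
definition hook_length :: "(nat \<Rightarrow> nat) \<Rightarrow> nat \<Rightarrow> nat \<Rightarrow> nat" where
  "hook_length p j c = (p j - c) + card {j'. 1 \<le> j' \<and> j' < j \<and> c \<le> p j'} + 1"

definition is_core :: "nat \<Rightarrow> nat \<Rightarrow> (nat \<Rightarrow> nat) \<Rightarrow> bool" where
  "is_core k q p \<longleftrightarrow> (\<forall>j\<in>{1..k}. \<forall>c\<in>{1..p j}. hook_length p j c \<noteq> q)"

definition schubert_cell :: "nat \<Rightarrow> nat \<Rightarrow> (nat \<Rightarrow> nat) \<Rightarrow> complex fps set set" where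
  "schubert_cell N k p = {W \<in> Grass N k.
     \<forall>i \<le> N. fdim (W \<inter> Vfilt N i) = card {j \<in> {1..k}. p j + j \<le> i}}"

end

theory Submission
  imports Defs
begin

text \<open>A subspace of \<open>V = \<complex>[[t]]/t\<^sup>N\<close> has a basis in echelon form, one vector for each
  \<open>t\<close>-adic order occurring in it; hence its dimension is the number of orders it contains, and
  the dimensions of its intersections with the filtration \<open>V\<^sub>i\<close> count the orders \<open>\<ge> N - i\<close>.
  So the Schubert cell \<open>C\<^sub>P\<close> consists exactly of the subspaces whose set of orders is
  \<open>{2\<delta> - (p\<^sub>j + j)}\<close>. Invariance under \<open>R\<close> forces this set to be closed under adding \<open>m\<close>
  and \<open>n\<close> (multiply by \<open>t\<^sup>m\<close>, \<open>t\<^sup>n\<close>), and conversely the monomial span of such a set is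
  \<open>R\<close>-invariant. Finally, in terms of the beta-numbers \<open>p\<^sub>j + j\<close> of \<open>P\<close>, the hooks of \<open>P\<close>
  correspond to pairs (beta-number, smaller positive non-beta-number) with the difference as
  hook length, so the closure under \<open>+q\<close> says precisely that \<open>P\<close> is a \<open>q\<close>-core.\<close>

unbundle fps_syntax

interpretation V: vector_space fscale
  by unfold_locales (auto simp: fscale_def algebra_simps simp flip: fps_const_add fps_const_mult)

lemma fscale_nth [simp]: "fscale c f $ i = c * f $ i"
  by (simp add: fscale_def)

definition subdegrees :: "complex fps set \<Rightarrow> nat set" where
  "subdegrees W = {d. \<exists>f\<in>W. f \<noteq> 0 \<and> subdegree f = d}"

lemma DeltaW_eq: "DeltaW N W = subdegrees W \<union> {N..}"
  unfolding DeltaW_def subdegrees_def by auto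

lemma subspace_vanishing_up_to: "V.subspace {f. \<forall>i\<le>d. f $ i = 0}"
  unfolding V.subspace_def by auto

lemma Vfilt_subspace: "V.subspace (Vfilt N i)"
  unfolding V.subspace_def Vfilt_def Vsp_def by auto

lemma subdegrees_subset_Vsp:
  assumes "W \<subseteq> Vsp N"
  shows "subdegrees W \<subseteq> {..<N}"
proof
  fix d assume "d \<in> subdegrees W"
  then obtain f where f: "f \<in> W" "f \<noteq> 0" "subdegree f = d" by (auto simp: subdegrees_def)
  then have "f $ d \<noteq> 0" by auto
  with f assms show "d \<in> {..<N}" unfolding Vsp_def by (metis (mono_tags) lessThan_iff mem_Collect_eq not_less subsetD)
qed

lemma independent_distinct_subdegrees:
  assumes "finite D" "\<And>d. d \<in> D \<Longrightarrow> e d \<noteq> 0 \<and> subdegree (e d) = d"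
  shows "V.independent (e ` D)"
  using assms
proof (induction D rule: finite_linorder_min_induct)
  case empty then show ?case by (simp add: V.independent_empty)
next
  case (insert b A)
  have "e ` A \<subseteq> {f. \<forall>i\<le>b. f $ i = 0}"
  proof
    fix f assume "f \<in> e ` A"
    then obtain a where "a \<in> A" "f = e a" by auto
    then have "b < subdegree f" using insert by auto
    then show "f \<in> {f. \<forall>i\<le>b. f $ i = 0}" by (auto intro!: nth_less_subdegree_zero)
  qed
  then have "V.span (e ` A) \<subseteq> {f. \<forall>i\<le>b. f $ i = 0}"
    by (rule V.span_minimal[OF _ subspace_vanishing_up_to])
  moreover have "e b $ b \<noteq> 0"
    using insert.prems[of b] by (metis insertI1 nth_subdegree_nonzero)
  ultimately have "e b \<notin> V.span (e ` A)" by auto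
  then show ?case using insert by (simp add: V.independent_insertI)
qed

text \<open>Gaussian elimination: subtracting a multiple of \<open>e (subdegree f)\<close> from \<open>f\<close> raises the
  subdegree, which is bounded by \<open>N\<close>.\<close>
lemma subspace_in_span_subdegree_reps:
  assumes U: "V.subspace U" "U \<subseteq> Vsp N"
    and e: "\<And>d. d \<in> subdegrees U \<Longrightarrow> e d \<in> U \<and> e d \<noteq> 0 \<and> subdegree (e d) = d"
    and f: "f \<in> U"
  shows "f \<in> V.span (e ` subdegrees U)"
  using f
proof (induction "N - subdegree f" arbitrary: f rule: less_induct)
  case less
  show ?case
  proof (cases "f = 0")
    case True then show ?thesis by (simp add: V.span_zero)
  next
    case False
    define d where "d = subdegree f"
    have dU: "d \<in> subdegrees U" using less.prems False d_def by (auto simp: subdegrees_def)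
    have dN: "d < N" using dU subdegrees_subset_Vsp[OF U(2)] by auto
    have ed: "e d $ d \<noteq> 0" using e[OF dU] by (metis nth_subdegree_nonzero)
    define g where "g = f - fscale (f $ d / e d $ d) (e d)"
    have gU: "g \<in> U"
      unfolding g_def using V.subspace_diff[OF U(1)] V.subspace_scale[OF U(1)] less.prems e[OF dU]
      by auto
    have "g \<in> V.span (e ` subdegrees U)"
    proof (cases "g = 0")
      case True then show ?thesis by (simp add: V.span_zero)
    next
      case False
      have "g $ i = 0" if "i \<le> d" for i
      proof (cases "i = d")
        case True then show ?thesis using ed by (simp add: g_def)
      next
        case False
        then have "f $ i = 0" "e d $ i = 0"
          using \<open>i \<le> d\<close> e[OF dU] d_def by (auto intro!: nth_less_subdegree_zero)
        then show ?thesis by (simp add: g_def)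
      qed
      with False have "d < subdegree g" by (intro subdegree_greaterI) auto
      then show ?thesis using less.hyps gU dN d_def by auto
    qed
    then have "g + fscale (f $ d / e d $ d) (e d) \<in> V.span (e ` subdegrees U)"
      using dU by (intro V.span_add[OF _ V.span_scale[OF V.span_base]]) auto
    then show ?thesis by (simp add: g_def)
  qed
qed

lemma dim_eq_card_subdegrees:
  assumes U: "V.subspace U" "U \<subseteq> Vsp N"
  shows "V.dim U = card (subdegrees U)"
proof -
  define e where "e d = (SOME f. f \<in> U \<and> f \<noteq> 0 \<and> subdegree f = d)" for d
  have e: "e d \<in> U \<and> e d \<noteq> 0 \<and> subdegree (e d) = d" if d: "d \<in> subdegrees U" for d
  proof -
    obtain f where "f \<in> U \<and> f \<noteq> 0 \<and> subdegree f = d" using d unfolding subdegrees_def by blast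
    then show ?thesis unfolding e_def by (rule someI)
  qed
  have fin: "finite (subdegrees U)"
    using subdegrees_subset_Vsp[OF U(2)] finite_subset by blast
  have "V.dim U = card (e ` subdegrees U)"
    using e subspace_in_span_subdegree_reps[OF U e]
    by (intro V.dim_unique[OF _ _ independent_distinct_subdegrees[OF fin] refl]) auto
  also have "\<dots> = card (subdegrees U)"
    using e by (intro card_image inj_onI) metis
  finally show ?thesis .
qed

lemma subdegrees_Int_Vfilt:
  assumes "W \<subseteq> Vsp N"
  shows "subdegrees (W \<inter> Vfilt N i) = {d \<in> subdegrees W. N - i \<le> d}"
proof (intro set_eqI iffI)
  fix d assume "d \<in> subdegrees (W \<inter> Vfilt N i)"
  then obtain f where f: "f \<in> W" "f \<in> Vfilt N i" "f \<noteq> 0" "subdegree f = d"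
    unfolding subdegrees_def by auto
  have "N - i \<le> subdegree f" using f by (intro subdegree_geI) (auto simp: Vfilt_def)
  then show "d \<in> {d \<in> subdegrees W. N - i \<le> d}" using f unfolding subdegrees_def by auto
next
  fix d assume "d \<in> {d \<in> subdegrees W. N - i \<le> d}"
  then obtain f where f: "f \<in> W" "f \<noteq> 0" "subdegree f = d" "N - i \<le> d"
    unfolding subdegrees_def by auto
  then have "f \<in> Vfilt N i" using assms unfolding Vfilt_def by (auto intro!: nth_less_subdegree_zero)
  then show "d \<in> subdegrees (W \<inter> Vfilt N i)" using f unfolding subdegrees_def by auto
qed

lemma fdim_Int_Vfilt:
  assumes "W \<in> Grass N k"
  shows "fdim (W \<inter> Vfilt N i) = card {d \<in> subdegrees W. N - i \<le> d}"
proof -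
  have W: "V.subspace W" "W \<subseteq> Vsp N" using assms unfolding Grass_def by auto
  have "V.subspace (W \<inter> Vfilt N i)" using W(1) Vfilt_subspace by (rule V.subspace_inter)
  moreover have "W \<inter> Vfilt N i \<subseteq> Vsp N" using W(2) by auto
  ultimately show ?thesis
    using dim_eq_card_subdegrees subdegrees_Int_Vfilt[OF W(2)] by (simp add: fdim_def)
qed

lemma young_mono:
  "young_in_square k p \<Longrightarrow> 1 \<le> i \<Longrightarrow> i \<le> j \<Longrightarrow> j \<le> k \<Longrightarrow> p i \<le> p j"
  unfolding young_in_square_def by blast

lemma young_beta_bounds:
  assumes "young_in_square k p" "j \<in> {1..k}"
  shows "1 \<le> p j + j \<and> p j + j \<le> 2 * k"
  using assms unfolding young_in_square_def by fastforce

lemma young_beta_strict_mono: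
  assumes "young_in_square k p" "j \<in> {1..k}" "j' \<in> {1..k}" "j < j'"
  shows "p j + j < p j' + j'"
  using young_mono[OF assms(1), of j j'] assms by auto

lemma young_beta_inj:
  assumes "young_in_square k p"
  shows "inj_on (\<lambda>j. p j + j) {1..k}"
proof (rule inj_onI)
  fix a b assume "a \<in> {1..k}" "b \<in> {1..k}" "p a + a = p b + b"
  then show "a = b"
    using young_beta_strict_mono[OF assms, of a b] young_beta_strict_mono[OF assms, of b a]
    by (cases a b rule: linorder_cases) auto
qed

lemma down_closed_eq_initial_segment:
  fixes k :: nat
  assumes "\<And>j j'. j \<in> {1..k} \<Longrightarrow> P j \<Longrightarrow> 1 \<le> j' \<Longrightarrow> j' \<le> j \<Longrightarrow> P j'"
  shows "\<exists>i\<le>k. \<forall>j\<in>{1..k}. P j \<longleftrightarrow> j \<le> i"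
proof -
  define i where "i = Max (insert 0 {j\<in>{1..k}. P j})"
  have i: "i \<in> insert 0 {j\<in>{1..k}. P j}" unfolding i_def by (intro Max_in) auto
  have "P j \<longleftrightarrow> j \<le> i" if "j \<in> {1..k}" for j
  proof
    assume "P j" then show "j \<le> i" using that unfolding i_def by simp
  next
    assume "j \<le> i"
    then have "i \<in> {1..k}" "P i" using i that by auto
    then show "P j" using assms \<open>j \<le> i\<close> that by auto
  qed
  moreover have "i \<le> k" using i by auto
  ultimately show ?thesis by blast
qed

text \<open>If the rows shorter than \<open>c\<close> are exactly the first \<open>i\<close> ones, the box \<open>(j, c)\<close> has leg
  \<open>j - i - 1\<close>.\<close>
lemma hook_length_eq:
  assumes j: "j \<in> {1..k}" and c: "1 \<le> c" "c \<le> p j"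
    and i: "\<forall>j'\<in>{1..k}. p j' < c \<longleftrightarrow> j' \<le> i"
  shows "i < j \<and> hook_length p j c = p j + j - c - i"
proof -
  have ij: "i < j" using i[rule_format, OF j] c by auto
  have "{j'. 1 \<le> j' \<and> j' < j \<and> c \<le> p j'} = {i+1..<j}"
  proof (intro set_eqI iffI)
    fix x assume "x \<in> {j'. 1 \<le> j' \<and> j' < j \<and> c \<le> p j'}"
    then show "x \<in> {i+1..<j}" using i[rule_format, of x] j by auto
  next
    fix x assume "x \<in> {i+1..<j}"
    then show "x \<in> {j'. 1 \<le> j' \<and> j' < j \<and> c \<le> p j'}" using i[rule_format, of x] j by auto
  qed
  then show ?thesis using ij c unfolding hook_length_def by simp
qed

text \<open>The box \<open>(j, c)\<close> corresponds to the gap \<open>c + i\<close> below the beta-number \<open>p j + j\<close>,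
  where \<open>i\<close> counts the rows shorter than \<open>c\<close>.\<close>
lemma hook_length_eq_beta_minus_gap:
  assumes y: "young_in_square k p" and j: "j \<in> {1..k}" and c: "c \<in> {1..p j}"
  shows "\<exists>g. 1 \<le> g \<and> g < p j + j \<and> (\<forall>j'\<in>{1..k}. p j' + j' \<noteq> g)
           \<and> hook_length p j c = p j + j - g"
proof -
  have "p j'' < c" if "j' \<in> {1..k}" "p j' < c" "1 \<le> j''" "j'' \<le> j'" for j' j''
    using young_mono[OF y, of j'' j'] that by auto
  then obtain i where iP: "\<forall>j'\<in>{1..k}. p j' < c \<longleftrightarrow> j' \<le> i"
    using down_closed_eq_initial_segment[of k "\<lambda>j'. p j' < c"] by blast
  have h: "hook_length p j c = p j + j - c - i"
    using hook_length_eq[OF j _ _ iP] c by auto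
  have "hook_length p j c \<ge> 1" unfolding hook_length_def by simp
  then have "c + i < p j + j" using h by linarith
  moreover have "p j' + j' \<noteq> c + i" if "j' \<in> {1..k}" for j'
    using iP that by (cases "j' \<le> i") force+
  ultimately show ?thesis using c h by (intro exI[of _ "c + i"]) auto
qed

lemma hook_length_of_gap:
  assumes y: "young_in_square k p" and j: "j \<in> {1..k}"
    and g: "1 \<le> g" "g < p j + j" "\<forall>j'\<in>{1..k}. p j' + j' \<noteq> g"
  shows "\<exists>c\<in>{1..p j}. hook_length p j c = p j + j - g"
proof -
  have "p j'' + j'' < g" if "j' \<in> {1..k}" "p j' + j' < g" "1 \<le> j''" "j'' \<le> j'" for j' j''
    using young_mono[OF y, of j'' j'] that by auto
  then obtain i where ik: "i \<le> k" and iP: "\<forall>j'\<in>{1..k}. p j' + j' < g \<longleftrightarrow> j' \<le> i"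
    using down_closed_eq_initial_segment[of k "\<lambda>j'. p j' + j' < g"] by blast
  have ij: "i < j" using iP[rule_format, OF j] g(2) by auto
  have "p i + i < g" if "i \<noteq> 0" using iP that ik by auto
  then have ig: "i < g" using g(1) by (cases "i = 0") auto
  have i1: "i + 1 \<in> {1..k}" using ij j by auto
  then have "g < p (i+1) + (i+1)" using iP[rule_format, OF i1] g(3)[rule_format, OF i1] by auto
  then have c_le: "g - i \<le> p (i+1)" by linarith
  have rows: "\<forall>j'\<in>{1..k}. p j' < g - i \<longleftrightarrow> j' \<le> i"
  proof
    fix j' assume j': "j' \<in> {1..k}"
    show "p j' < g - i \<longleftrightarrow> j' \<le> i"
    proof
      assume "p j' < g - i"
      then show "j' \<le> i" using young_mono[OF y, of "i+1" j'] j' c_le by (cases "j' \<le> i") auto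
    next
      assume "j' \<le> i"
      then show "p j' < g - i" using iP[rule_format, of i] young_mono[OF y, of j' i] j' ik by auto
    qed
  qed
  have "g - i \<le> p j" using c_le young_mono[OF y, of "i+1" j] ij j by auto
  with hook_length_eq[OF j _ _ rows] ig g(2) show ?thesis
    by (intro bexI[of _ "g - i"]) auto
qed

lemma is_core_iff_beta_numbers:
  assumes y: "young_in_square k p" and q: "0 < q"
  shows "is_core k q p \<longleftrightarrow>
    (\<forall>j\<in>{1..k}. q < p j + j \<longrightarrow> (\<exists>j'\<in>{1..k}. p j' + j' + q = p j + j))"
proof
  assume core: "is_core k q p"
  show "\<forall>j\<in>{1..k}. q < p j + j \<longrightarrow> (\<exists>j'\<in>{1..k}. p j' + j' + q = p j + j)"
  proof (intro ballI impI, rule ccontr)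
    fix j assume j: "j \<in> {1..k}" "q < p j + j" and "\<not> (\<exists>j'\<in>{1..k}. p j' + j' + q = p j + j)"
    then have gap: "\<forall>j'\<in>{1..k}. p j' + j' \<noteq> p j + j - q" by auto
    have "1 \<le> p j + j - q" "p j + j - q < p j + j" using j(2) q by auto
    then obtain c where "c \<in> {1..p j}" "hook_length p j c = q"
      using hook_length_of_gap[OF y j(1) _ _ gap] j(2) by auto
    then show False using core j(1) unfolding is_core_def by blast
  qed
next
  assume beta: "\<forall>j\<in>{1..k}. q < p j + j \<longrightarrow> (\<exists>j'\<in>{1..k}. p j' + j' + q = p j + j)"
  show "is_core k q p" unfolding is_core_def
  proof (intro ballI notI)
    fix j c assume j: "j \<in> {1..k}" and c: "c \<in> {1..p j}" and h: "hook_length p j c = q"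
    obtain g where g: "1 \<le> g" "g < p j + j" "\<forall>j'\<in>{1..k}. p j' + j' \<noteq> g" "q = p j + j - g"
      using hook_length_eq_beta_minus_gap[OF y j c] h by auto
    then have "q < p j + j" by linarith
    then obtain j' where j': "j' \<in> {1..k}" "p j' + j' + q = p j + j" using beta j by blast
    with g(2,4) have "p j' + j' = g" by linarith
    then show False using g(3) j'(1) by blast
  qed
qed

definition schubert_subdegrees :: "nat \<Rightarrow> (nat \<Rightarrow> nat) \<Rightarrow> nat set" where
  "schubert_subdegrees k p = (\<lambda>j. 2 * k - (p j + j)) ` {1..k}"

lemma schubert_subdegrees_subset:
  "young_in_square k p \<Longrightarrow> schubert_subdegrees k p \<subseteq> {..<2 * k}"
  unfolding schubert_subdegrees_def using young_beta_bounds by force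

lemma inj_on_schubert_subdegree:
  assumes y: "young_in_square k p"
  shows "inj_on (\<lambda>j. 2 * k - (p j + j)) {1..k}"
proof (rule inj_onI)
  fix a b assume a: "a \<in> {1..k}" and b: "b \<in> {1..k}" and "2 * k - (p a + a) = 2 * k - (p b + b)"
  then have "p a + a = p b + b" using young_beta_bounds[OF y a] young_beta_bounds[OF y b] by auto
  then show "a = b" using inj_onD[OF young_beta_inj[OF y]] a b by blast
qed

lemma card_schubert_subdegrees:
  "young_in_square k p \<Longrightarrow> card (schubert_subdegrees k p) = k"
  unfolding schubert_subdegrees_def using card_image[OF inj_on_schubert_subdegree] by simp

lemma card_schubert_subdegrees_ge:
  assumes y: "young_in_square k p" and i: "i \<le> 2 * k"
  shows "card {j \<in> {1..k}. p j + j \<le> i} = card {d \<in> schubert_subdegrees k p. 2 * k - i \<le> d}"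
proof -
  have "{d \<in> schubert_subdegrees k p. 2 * k - i \<le> d}
      = (\<lambda>j. 2 * k - (p j + j)) ` {j \<in> {1..k}. p j + j \<le> i}"
    unfolding schubert_subdegrees_def using young_beta_bounds[OF y] i by force
  moreover have "inj_on (\<lambda>j. 2 * k - (p j + j)) {j \<in> {1..k}. p j + j \<le> i}"
    using inj_on_schubert_subdegree[OF y] by (rule inj_on_subset) auto
  ultimately show ?thesis by (simp add: card_image)
qed

lemma finite_set_eq_by_tail_counts:
  fixes A B :: "nat set"
  assumes fin: "finite A" "finite B" and c: "\<And>t. card {d\<in>A. t \<le> d} = card {d\<in>B. t \<le> d}"
  shows "A = B"
proof -
  have tail: "card {d\<in>X. t \<le> d}
      = (if t \<in> X then Suc (card {d\<in>X. Suc t \<le> d}) else card {d\<in>X. Suc t \<le> d})"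
    if "finite X" for X :: "nat set" and t
  proof -
    have "{d\<in>X. t \<le> d} = (if t \<in> X then insert t {d\<in>X. Suc t \<le> d} else {d\<in>X. Suc t \<le> d})"
      by (auto simp: le_eq_less_or_eq Suc_le_eq)
    then show ?thesis using that by auto
  qed
  have "t \<in> A \<longleftrightarrow> t \<in> B" for t
    using c[of t] c[of "Suc t"] tail[OF fin(1), of t] tail[OF fin(2), of t] by (auto split: if_splits)
  then show ?thesis by auto
qed

lemma schubert_cell_iff_subdegrees:
  assumes y: "young_in_square k p" and W: "W \<in> Grass (2 * k) k"
  shows "W \<in> schubert_cell (2 * k) k p \<longleftrightarrow> subdegrees W = schubert_subdegrees k p"
proof -
  let ?S = "schubert_subdegrees k p"
  have sub: "subdegrees W \<subseteq> {..<2 * k}" "?S \<subseteq> {..<2 * k}"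
    using W subdegrees_subset_Vsp schubert_subdegrees_subset[OF y] unfolding Grass_def by auto
  have "W \<in> schubert_cell (2 * k) k p \<longleftrightarrow>
      (\<forall>i\<le>2 * k. card {d \<in> subdegrees W. 2 * k - i \<le> d} = card {d \<in> ?S. 2 * k - i \<le> d})"
    unfolding schubert_cell_def using W fdim_Int_Vfilt card_schubert_subdegrees_ge[OF y] by auto
  also have "\<dots> \<longleftrightarrow> (\<forall>t. card {d \<in> subdegrees W. t \<le> d} = card {d \<in> ?S. t \<le> d})"
  proof
    assume c: "\<forall>i\<le>2 * k. card {d \<in> subdegrees W. 2 * k - i \<le> d} = card {d \<in> ?S. 2 * k - i \<le> d}"
    show "\<forall>t. card {d \<in> subdegrees W. t \<le> d} = card {d \<in> ?S. t \<le> d}"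
    proof
      fix t
      show "card {d \<in> subdegrees W. t \<le> d} = card {d \<in> ?S. t \<le> d}"
      proof (cases "t \<le> 2 * k")
        case True then show ?thesis using c[rule_format, of "2 * k - t"] by auto
      next
        case False
        then have "{d \<in> subdegrees W. t \<le> d} = {}" "{d \<in> ?S. t \<le> d} = {}" using sub by auto
        then show ?thesis by (simp only:)
      qed
    qed
  qed simp
  also have "\<dots> \<longleftrightarrow> subdegrees W = ?S"
    using finite_set_eq_by_tail_counts[OF finite_subset[OF sub(1)] finite_subset[OF sub(2)]] by auto
  finally show ?thesis .
qed

lemma DeltaW_eq_iff_subdegrees:
  assumes "W \<subseteq> Vsp N" and "T \<subseteq> {..<N}"
  shows "DeltaW N W = T \<union> {N..} \<longleftrightarrow> subdegrees W = T"
proof -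
  have W: "subdegrees W \<subseteq> {..<N}" using assms(1) by (rule subdegrees_subset_Vsp)
  have "subdegrees W \<union> {N..} = T \<union> {N..} \<longleftrightarrow> subdegrees W = T"
  proof
    assume e: "subdegrees W \<union> {N..} = T \<union> {N..}"
    show "subdegrees W = T"
    proof (rule set_eqI)
      fix x show "x \<in> subdegrees W \<longleftrightarrow> x \<in> T"
        using e W assms(2) by (cases "x < N") (auto simp: set_eq_iff)
    qed
  qed simp
  then show ?thesis by (simp add: DeltaW_eq)
qed

definition shift_closed :: "nat \<Rightarrow> nat set \<Rightarrow> nat \<Rightarrow> bool" where
  "shift_closed N A q \<longleftrightarrow> (\<forall>t\<in>A. t + q < N \<longrightarrow> t + q \<in> A)"

lemma shift_closed_add_mult:
  assumes "shift_closed N A q" "t \<in> A" "t + a * q < N"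
  shows "t + a * q \<in> A"
  using assms(3)
proof (induction a)
  case 0 then show ?case using assms(2) by simp
next
  case (Suc a)
  then have "t + a * q \<in> A" "t + a * q + q < N" by auto
  then have "t + a * q + q \<in> A" using assms(1) unfolding shift_closed_def by blast
  then show ?case by (simp add: algebra_simps)
qed

lemma shift_closed_schubert_subdegrees_iff_is_core:
  assumes y: "young_in_square k p" and q: "0 < q"
  shows "shift_closed (2 * k) (schubert_subdegrees k p) q \<longleftrightarrow> is_core k q p"
proof -
  have "(2 * k - (p j + j) + q < 2 * k \<longrightarrow> 2 * k - (p j + j) + q \<in> schubert_subdegrees k p)
      \<longleftrightarrow> (q < p j + j \<longrightarrow> (\<exists>j'\<in>{1..k}. p j' + j' + q = p j + j))" if j: "j \<in> {1..k}" for j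
  proof -
    have "2 * k - (p j + j) + q \<in> schubert_subdegrees k p
        \<longleftrightarrow> (\<exists>j'\<in>{1..k}. p j' + j' + q = p j + j)" if "q < p j + j"
    proof -
      have "2 * k - (p j + j) + q = 2 * k - (p j' + j') \<longleftrightarrow> p j' + j' + q = p j + j"
        if "j' \<in> {1..k}" for j'
        using young_beta_bounds[OF y j] young_beta_bounds[OF y that] \<open>q < p j + j\<close> by auto
      then show ?thesis unfolding schubert_subdegrees_def image_iff by (intro bex_cong) auto
    qed
    moreover have "2 * k - (p j + j) + q < 2 * k \<longleftrightarrow> q < p j + j"
      using young_beta_bounds[OF y j] by auto
    ultimately show ?thesis by blast
  qed
  then have "shift_closed (2 * k) (schubert_subdegrees k p) q
      \<longleftrightarrow> (\<forall>j\<in>{1..k}. q < p j + j \<longrightarrow> (\<exists>j'\<in>{1..k}. p j' + j' + q = p j + j))"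
    unfolding shift_closed_def schubert_subdegrees_def by auto
  then show ?thesis using is_core_iff_beta_numbers[OF y q] by simp
qed

lemma fps_X_power_mem_semigroup_ring: "fps_X ^ (a * m + b * n) \<in> semigroup_ring m n"
  unfolding semigroup_ring_def by (simp add: fps_X_power_nth) blast

lemma subdegrees_shift_closed:
  assumes inv: "\<forall>w\<in>W. fps_cutoff N (fps_X ^ q * w) \<in> W"
  shows "shift_closed N (subdegrees W) q"
  unfolding shift_closed_def
proof (intro ballI impI)
  fix t assume t: "t \<in> subdegrees W" "t + q < N"
  then obtain f where f: "f \<in> W" "f \<noteq> 0" "subdegree f = t" unfolding subdegrees_def by auto
  define g where "g = fps_cutoff N (fps_X ^ q * f)"
  have "g \<in> W" using inv f unfolding g_def by auto
  moreover have g1: "g $ (t + q) \<noteq> 0" using t f unfolding g_def by (auto simp: fps_X_power_mult_nth)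
  moreover have "g $ i = 0" if "i < t + q" for i
    using that f unfolding g_def by (auto simp: fps_X_power_mult_nth intro!: nth_less_subdegree_zero)
  then have "subdegree g = t + q" using g1 by (intro subdegreeI)
  moreover have "g \<noteq> 0" using g1 by auto
  ultimately show "t + q \<in> subdegrees W" unfolding subdegrees_def by blast
qed

lemma JF_subdegrees_shift_closed:
  assumes "W \<in> JF m n"
  shows "shift_closed (2 * delta m n) (subdegrees W) m \<and> shift_closed (2 * delta m n) (subdegrees W) n"
proof -
  have "fps_X ^ m \<in> semigroup_ring m n" "fps_X ^ n \<in> semigroup_ring m n"
    using fps_X_power_mem_semigroup_ring[of 1 m 0 n] fps_X_power_mem_semigroup_ring[of 0 m 1 n]
    by simp_all
  with assms show ?thesis unfolding JF_def by (simp add: subdegrees_shift_closed)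
qed

definition monomial_subspace :: "nat \<Rightarrow> nat set \<Rightarrow> complex fps set" where
  "monomial_subspace N T = {f \<in> Vsp N. \<forall>i. f $ i \<noteq> 0 \<longrightarrow> i \<in> T}"

lemma monomial_subspace_subspace: "V.subspace (monomial_subspace N T)"
proof -
  have "(f + g) $ i \<noteq> 0 \<Longrightarrow> f $ i \<noteq> 0 \<or> g $ i \<noteq> 0" for f g :: "complex fps" and i
    by auto
  then show ?thesis unfolding V.subspace_def monomial_subspace_def Vsp_def by fastforce
qed

lemma subdegrees_monomial_subspace:
  assumes "T \<subseteq> {..<N}"
  shows "subdegrees (monomial_subspace N T) = T"
proof (intro set_eqI iffI)
  fix d assume "d \<in> subdegrees (monomial_subspace N T)"
  then obtain f where "f \<in> monomial_subspace N T" "f \<noteq> 0" "subdegree f = d"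
    unfolding subdegrees_def by auto
  then show "d \<in> T" unfolding monomial_subspace_def using nth_subdegree_nonzero by blast
next
  fix d assume "d \<in> T"
  then have "fps_X ^ d \<in> monomial_subspace N T"
    using assms unfolding monomial_subspace_def Vsp_def by auto
  then show "d \<in> subdegrees (monomial_subspace N T)"
    unfolding subdegrees_def by (intro CollectI bexI[of _ "fps_X ^ d"]) (auto simp: fps_X_power_subdegree)
qed

text \<open>A coefficient of \<open>r * w\<close> in degree \<open>i\<close> comes from a product of a coefficient of \<open>r\<close> in
  degree \<open>a m + b n\<close> and one of \<open>w\<close> in degree \<open>i - a m - b n \<in> T\<close>; closure under \<open>+m\<close>, \<open>+n\<close>
  carries the latter back to \<open>i\<close>.\<close>
lemma monomial_subspace_mem_JF:
  assumes T: "T \<subseteq> {..<2 * delta m n}" "card T = delta m n"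
    and closed: "shift_closed (2 * delta m n) T m" "shift_closed (2 * delta m n) T n"
  shows "monomial_subspace (2 * delta m n) T \<in> JF m n"
proof -
  let ?N = "2 * delta m n" and ?W = "monomial_subspace (2 * delta m n) T"
  have sub: "?W \<subseteq> Vsp ?N" unfolding monomial_subspace_def by auto
  have "fdim ?W = delta m n"
    using dim_eq_card_subdegrees[OF monomial_subspace_subspace sub]
      subdegrees_monomial_subspace[OF T(1)] T(2) by (simp add: fdim_def)
  then have G: "?W \<in> Grass ?N (delta m n)"
    unfolding Grass_def using sub monomial_subspace_subspace by auto
  have "fps_cutoff ?N (r * w) \<in> ?W" if r: "r \<in> semigroup_ring m n" and w: "w \<in> ?W" for r w
  proof -
    have "i \<in> T" if i: "fps_cutoff ?N (r * w) $ i \<noteq> 0" for i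
    proof -
      have iN: "i < ?N" and "(\<Sum>a=0..i. r $ a * w $ (i - a)) \<noteq> 0"
        using i by (auto simp: fps_mult_nth split: if_splits)
      then obtain a where "a \<in> {0..i}" "r $ a * w $ (i - a) \<noteq> 0"
        by (meson sum.not_neutral_contains_not_neutral)
      then have a: "a \<le> i" "r $ a \<noteq> 0" "w $ (i - a) \<noteq> 0" by auto
      then obtain x y where xy: "a = x * m + y * n" and ia: "i - a \<in> T"
        using r w unfolding semigroup_ring_def monomial_subspace_def by blast
      have "i - a + x * m \<in> T"
        using shift_closed_add_mult[OF closed(1) ia, of x] a iN xy by auto
      then have "i - a + x * m + y * n \<in> T"
        using shift_closed_add_mult[OF closed(2), of "i - a + x * m" y] a iN xy by auto
      then show "i \<in> T" using a xy by auto
    qed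
    then show ?thesis unfolding monomial_subspace_def Vsp_def by auto
  qed
  then show ?thesis using G unfolding JF_def by auto
qed

lemma JF_with_subdegrees_iff:
  assumes "T \<subseteq> {..<2 * delta m n}" "card T = delta m n"
  shows "(\<exists>W\<in>JF m n. subdegrees W = T)
    \<longleftrightarrow> shift_closed (2 * delta m n) T m \<and> shift_closed (2 * delta m n) T n"
proof
  assume "\<exists>W\<in>JF m n. subdegrees W = T"
  then show "shift_closed (2 * delta m n) T m \<and> shift_closed (2 * delta m n) T n"
    using JF_subdegrees_shift_closed by blast
next
  assume "shift_closed (2 * delta m n) T m \<and> shift_closed (2 * delta m n) T n"
  then show "\<exists>W\<in>JF m n. subdegrees W = T"
    using monomial_subspace_mem_JF[OF assms] subdegrees_monomial_subspace[OF assms(1)] by blast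
qed

lemma JF_subset_Grass: "JF m n \<subseteq> Grass (2 * delta m n) (delta m n)"
  unfolding JF_def by blast

lemma schubert_cell_Int_JF:
  assumes "young_in_square (delta m n) p"
  shows "schubert_cell (2 * delta m n) (delta m n) p \<inter> JF m n
       = {W \<in> JF m n. subdegrees W = schubert_subdegrees (delta m n) p}"
  using schubert_cell_iff_subdegrees[OF assms] JF_subset_Grass by blast

theorem mainTheorem4:
  fixes m n :: nat and p :: "nat \<Rightarrow> nat"
  assumes "0 < m" and "0 < n" and "coprime m n"
    and "young_in_square (delta m n) p"
  shows "(schubert_cell (2 * delta m n) (delta m n) p \<inter> JF m n \<noteq> {}
            \<longleftrightarrow> is_core (delta m n) m p \<and> is_core (delta m n) n p)
       \<and> (is_core (delta m n) m p \<and> is_core (delta m n) n p \<longrightarrow>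
            (\<exists>D. (\<forall>W \<in> schubert_cell (2 * delta m n) (delta m n) p.
                      DeltaW (2 * delta m n) W = D)
               \<and> schubert_cell (2 * delta m n) (delta m n) p \<inter> JF m n
                   = {W \<in> JF m n. DeltaW (2 * delta m n) W = D}))"
proof -
  let ?k = "delta m n"
  let ?S = "schubert_subdegrees ?k p" and ?C = "schubert_cell (2 * ?k) ?k p"
  have y: "young_in_square ?k p" by fact
  have S: "?S \<subseteq> {..<2 * ?k}" "card ?S = ?k"
    using schubert_subdegrees_subset[OF y] card_schubert_subdegrees[OF y] by auto
  have Delta: "DeltaW (2 * ?k) W = ?S \<union> {2 * ?k..} \<longleftrightarrow> subdegrees W = ?S"
    if "W \<in> Grass (2 * ?k) ?k" for W
    using DeltaW_eq_iff_subdegrees[OF _ S(1)] that unfolding Grass_def by blast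
  have "?C \<inter> JF m n \<noteq> {} \<longleftrightarrow> (\<exists>W\<in>JF m n. subdegrees W = ?S)"
    unfolding schubert_cell_Int_JF[OF y] by blast
  also have "\<dots> \<longleftrightarrow> is_core ?k m p \<and> is_core ?k n p"
    unfolding JF_with_subdegrees_iff[OF S]
    using shift_closed_schubert_subdegrees_iff_is_core[OF y] assms(1,2) by simp
  finally have cores: "?C \<inter> JF m n \<noteq> {} \<longleftrightarrow> is_core ?k m p \<and> is_core ?k n p" .
  have "DeltaW (2 * ?k) W = ?S \<union> {2 * ?k..}" if "W \<in> ?C" for W
  proof -
    have "W \<in> Grass (2 * ?k) ?k" using that unfolding schubert_cell_def by blast
    with that show ?thesis using schubert_cell_iff_subdegrees[OF y] Delta by blast
  qed
  moreover have "?C \<inter> JF m n = {W \<in> JF m n. DeltaW (2 * ?k) W = ?S \<union> {2 * ?k..}}"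
    unfolding schubert_cell_Int_JF[OF y] using Delta JF_subset_Grass by blast
  ultimately show ?thesis using cores by blast
qed

end
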